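(* Let $L$ be any finite-dimensional Lie algebra over a field $F$. Then $\phi^*(L)=R(L)$, the solvable radical of $L$.
   Context: For a nonzero subalgebra $X$ of $L$, the strict core $k(X)$ is the sum of all ideals of $L$ that are proper subalgebras of $X$ (it is $0$ if there are none). For a maximal subalgebra $M$ of $L$, a subalgebra $C$ is a completion of $M$ if $C\not\subseteq M$ but every proper subalgebra of $C$ that is an ideal of $L$ is contained in $M$; an ideal completion is a completion that is an ideal of $L$; an abelian ideal completion is an ideal completion $C$ with $C/k(C)$ abelian. $F^*(L)$ is the intersection of all maximal subalgebras of $L$ which have no abelian ideal completion (with $F^*(L)=L$ if there are no such maximal subalgebras), and $\phi^*(L)$ is the largest ideal of $L$ contained in $F^*(L)$. $R(L)$ is the largest solvable ideal of $L$. *)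

theory Defs
  imports Main "HOL.Vector_Spaces"
begin

definition lie_algebra :: "('a::field \<Rightarrow> 'b::ab_group_add \<Rightarrow> 'b) \<Rightarrow> ('b \<Rightarrow> 'b \<Rightarrow> 'b) \<Rightarrow> bool" where
  "lie_algebra scale br \<longleftrightarrow>
     vector_space scale \<and>
     (\<forall>x y z. br (x + y) z = br x z + br y z) \<and>
     (\<forall>x y z. br x (y + z) = br x y + br x z) \<and>
     (\<forall>a x y. br (scale a x) y = scale a (br x y)) \<and>
     (\<forall>a x y. br x (scale a y) = scale a (br x y)) \<and>
     (\<forall>x. br x x = 0) \<and>
     (\<forall>x y z. br x (br y z) + br y (br z x) + br z (br x y) = 0)"

definition fin_dim :: "('a::field \<Rightarrow> 'b::ab_group_add \<Rightarrow> 'b) \<Rightarrow> bool" where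
  "fin_dim scale \<longleftrightarrow> (\<exists>B. finite B \<and> module.span scale B = UNIV)"

definition lie_subalgebra :: "('a::field \<Rightarrow> 'b::ab_group_add \<Rightarrow> 'b) \<Rightarrow> ('b \<Rightarrow> 'b \<Rightarrow> 'b) \<Rightarrow> 'b set \<Rightarrow> bool" where
  "lie_subalgebra scale br S \<longleftrightarrow> module.subspace scale S \<and> (\<forall>x\<in>S. \<forall>y\<in>S. br x y \<in> S)"

definition lie_ideal :: "('a::field \<Rightarrow> 'b::ab_group_add \<Rightarrow> 'b) \<Rightarrow> ('b \<Rightarrow> 'b \<Rightarrow> 'b) \<Rightarrow> 'b set \<Rightarrow> bool" where
  "lie_ideal scale br I \<longleftrightarrow> module.subspace scale I \<and> (\<forall>x. \<forall>y\<in>I. br x y \<in> I)"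

definition lie_bracket_set :: "('a::field \<Rightarrow> 'b::ab_group_add \<Rightarrow> 'b) \<Rightarrow> ('b \<Rightarrow> 'b \<Rightarrow> 'b) \<Rightarrow> 'b set \<Rightarrow> 'b set \<Rightarrow> 'b set" where
  "lie_bracket_set scale br S T = module.span scale {br x y | x y. x \<in> S \<and> y \<in> T}"

fun derived_series :: "('a::field \<Rightarrow> 'b::ab_group_add \<Rightarrow> 'b) \<Rightarrow> ('b \<Rightarrow> 'b \<Rightarrow> 'b) \<Rightarrow> nat \<Rightarrow> 'b set \<Rightarrow> 'b set" where
  "derived_series scale br 0 S = S"
| "derived_series scale br (Suc n) S =
     lie_bracket_set scale br (derived_series scale br n S) (derived_series scale br n S)"

definition lie_solvable :: "('a::field \<Rightarrow> 'b::ab_group_add \<Rightarrow> 'b) \<Rightarrow> ('b \<Rightarrow> 'b \<Rightarrow> 'b) \<Rightarrow> 'b set \<Rightarrow> bool" where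
  "lie_solvable scale br S \<longleftrightarrow> (\<exists>n. derived_series scale br n S = {0})"

definition maximal_subalgebra :: "('a::field \<Rightarrow> 'b::ab_group_add \<Rightarrow> 'b) \<Rightarrow> ('b \<Rightarrow> 'b \<Rightarrow> 'b) \<Rightarrow> 'b set \<Rightarrow> bool" where
  "maximal_subalgebra scale br M \<longleftrightarrow> lie_subalgebra scale br M \<and> M \<noteq> UNIV \<and>
     (\<forall>S. lie_subalgebra scale br S \<and> M \<subseteq> S \<longrightarrow> S = M \<or> S = UNIV)"

text \<open>Strict core k(X): sum of all ideals of L that are proper subsets (subalgebras) of X;
  the sum of subspaces is the span of their union, which is {0} if there are none.\<close>
definition strict_core :: "('a::field \<Rightarrow> 'b::ab_group_add \<Rightarrow> 'b) \<Rightarrow> ('b \<Rightarrow> 'b \<Rightarrow> 'b) \<Rightarrow> 'b set \<Rightarrow> 'b set" where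
  "strict_core scale br X = module.span scale (\<Union>{I. lie_ideal scale br I \<and> I \<subset> X})"

definition completion :: "('a::field \<Rightarrow> 'b::ab_group_add \<Rightarrow> 'b) \<Rightarrow> ('b \<Rightarrow> 'b \<Rightarrow> 'b) \<Rightarrow> 'b set \<Rightarrow> 'b set \<Rightarrow> bool" where
  "completion scale br M C \<longleftrightarrow> lie_subalgebra scale br C \<and> \<not> C \<subseteq> M \<and>
     (\<forall>I. lie_subalgebra scale br I \<and> I \<subset> C \<and> lie_ideal scale br I \<longrightarrow> I \<subseteq> M)"

definition ideal_completion :: "('a::field \<Rightarrow> 'b::ab_group_add \<Rightarrow> 'b) \<Rightarrow> ('b \<Rightarrow> 'b \<Rightarrow> 'b) \<Rightarrow> 'b set \<Rightarrow> 'b set \<Rightarrow> bool" where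
  "ideal_completion scale br M C \<longleftrightarrow> completion scale br M C \<and> lie_ideal scale br C"

text \<open>C/k(C) abelian, i.e. [C,C] \<subseteq> k(C).\<close>
definition abelian_ideal_completion :: "('a::field \<Rightarrow> 'b::ab_group_add \<Rightarrow> 'b) \<Rightarrow> ('b \<Rightarrow> 'b \<Rightarrow> 'b) \<Rightarrow> 'b set \<Rightarrow> 'b set \<Rightarrow> bool" where
  "abelian_ideal_completion scale br M C \<longleftrightarrow> ideal_completion scale br M C \<and>
     (\<forall>x\<in>C. \<forall>y\<in>C. br x y \<in> strict_core scale br C)"

text \<open>F*(L); an empty intersection is UNIV = L.\<close>
definition Fstar :: "('a::field \<Rightarrow> 'b::ab_group_add \<Rightarrow> 'b) \<Rightarrow> ('b \<Rightarrow> 'b \<Rightarrow> 'b) \<Rightarrow> 'b set" where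
  "Fstar scale br = \<Inter>{M. maximal_subalgebra scale br M \<and>
                          \<not> (\<exists>C. abelian_ideal_completion scale br M C)}"

definition phistar :: "('a::field \<Rightarrow> 'b::ab_group_add \<Rightarrow> 'b) \<Rightarrow> ('b \<Rightarrow> 'b \<Rightarrow> 'b) \<Rightarrow> 'b set" where
  "phistar scale br = (GREATEST I. lie_ideal scale br I \<and> I \<subseteq> Fstar scale br)"

definition solv_radical :: "('a::field \<Rightarrow> 'b::ab_group_add \<Rightarrow> 'b) \<Rightarrow> ('b \<Rightarrow> 'b \<Rightarrow> 'b) \<Rightarrow> 'b set" where
  "solv_radical scale br = (GREATEST I. lie_ideal scale br I \<and> lie_solvable scale br I)"

end

theory Submission
  imports Defs
begin

text \<open>
  Both \<open>\<phi>*(L)\<close> and \<open>R(L)\<close> are greatest elements of a family of ideals, and the two families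
  coincide: an ideal lies in \<open>F*(L)\<close> iff it is solvable.

  If a solvable ideal \<open>R\<close> is not inside a maximal subalgebra \<open>M\<close>, let \<open>D\<close> be the last term of
  its derived series not inside \<open>M\<close> and \<open>C \<subseteq> D\<close> an ideal of least dimension not inside \<open>M\<close>.
  Then \<open>C\<close> is an ideal completion of \<open>M\<close>, and \<open>[C,C] \<subseteq> [D,D] \<subseteq> M\<close> is an ideal properly inside
  \<open>C\<close>, hence inside \<open>k(C)\<close>: the completion is abelian.

  If an ideal inside \<open>F*(L)\<close> is not solvable, its derived series stops at a perfect ideal
  \<open>J \<noteq> 0\<close>; take a chief factor \<open>J/K\<close>. By Engel's theorem some \<open>x \<in> J\<close> does not act nilpotently
  on \<open>J/K\<close>, so the Fitting null component of \<open>ad x\<close> plus \<open>K\<close> is a proper subalgebra, contained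
  in some maximal subalgebra \<open>M\<close>. As \<open>L = L\<^sub>0(ad x) + [x,L]\<close>, \<open>M\<close> cannot contain \<open>J\<close>. Finally an
  abelian ideal completion \<open>C\<close> of \<open>M\<close> would give \<open>J = [J,J] \<subseteq> M\<close>, using \<open>J = C + K\<close> if
  \<open>C \<subseteq> J\<close> and \<open>L = M + C\<close> otherwise. So \<open>F*(L) \<subseteq> M\<close>, which does not contain \<open>J\<close>.
\<close>

lemma funpow_closed:
  assumes "\<And>w. w \<in> S \<Longrightarrow> f w \<in> S" and "w \<in> S"
  shows "(f ^^ n) w \<in> S"
  by (induction n) (simp_all add: assms)

context vector_space
begin

lemma sums_superset_left: "subspace B \<Longrightarrow> A \<subseteq> {a + b | a b. a \<in> A \<and> b \<in> B}"
  using subspace_0 by force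

lemma sums_superset_right: "subspace A \<Longrightarrow> B \<subseteq> {a + b | a b. a \<in> A \<and> b \<in> B}"
  using subspace_0 by force

lemma span_insert_subspaceE:
  assumes "u \<in> span (insert y B)" "subspace B"
  obtains b c where "b \<in> B" "u = b + scale c y"
proof -
  obtain c where "u - scale c y \<in> span B" using assms(1) span_insert[of y B] by auto
  then have "u - scale c y \<in> B" using assms(2) by (metis span_eq_iff)
  then show thesis using that[of "u - scale c y" c] by simp
qed

end

context finite_dimensional_vector_space
begin

lemma dim_strict_mono:
  assumes "subspace S" "subspace T" "S \<subset> T"
  shows "dim S < dim T"
proof -
  have "span S \<subset> span T" using assms by (simp add: span_eq_iff[THEN iffD2])
  then show ?thesis by (rule dim_psubset)
qed

lemma ex_dim_maximal:
  assumes "P S"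
  shows "\<exists>T. P T \<and> (\<forall>T'. P T' \<longrightarrow> dim T' \<le> dim T)"
proof -
  obtain T where T: "P T" "\<forall>T'. P T' \<longrightarrow> dimension - dim T \<le> dimension - dim T'"
    using ex_has_least_nat[of P S "\<lambda>T. dimension - dim T", OF assms] by blast
  have "dim T' \<le> dim T" if "P T'" for T'
    using T(2) that dim_subset_UNIV[of T] dim_subset_UNIV[of T'] by auto
  then show ?thesis using T(1) by blast
qed

lemma decreasing_subspaces_stabilize:
  assumes "\<And>n. subspace (X n)" "\<And>n. X (Suc n) \<subseteq> X n"
  shows "\<exists>n. X (Suc n) = X n"
proof -
  obtain n where "\<forall>m. dim (X n) \<le> dim (X m)"
    using ex_has_least_nat[of "\<lambda>_. True" 0 "\<lambda>n. dim (X n)"] by blast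
  then have "X (Suc n) = X n" by (intro subspace_dim_equal assms) blast
  then show ?thesis ..
qed

end

locale lie_alg = vector_space scale
  for scale :: "'a::field \<Rightarrow> 'b::ab_group_add \<Rightarrow> 'b" +
  fixes br :: "'b \<Rightarrow> 'b \<Rightarrow> 'b"
  assumes lie_algebra: "lie_algebra scale br"
begin

abbreviation ideal :: "'b set \<Rightarrow> bool" where "ideal I \<equiv> lie_ideal scale br I"
abbreviation subalg :: "'b set \<Rightarrow> bool" where "subalg S \<equiv> lie_subalgebra scale br S"

lemma br_add_left: "br (x + y) z = br x z + br y z"
  using lie_algebra unfolding lie_algebra_def by blast

lemma br_scale_left: "br (scale a x) y = scale a (br x y)"
  using lie_algebra unfolding lie_algebra_def by blast

lemma br_self [simp]: "br x x = 0"
  using lie_algebra unfolding lie_algebra_def by blast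

lemma jacobi: "br x (br y z) + br y (br z x) + br z (br x y) = 0"
  using lie_algebra unfolding lie_algebra_def by blast

lemma module_hom_br: "module_hom scale scale (br x)"
  using lie_algebra by (simp add: module_hom_iff module_axioms lie_algebra_def)

lemmas br_add_right = module_hom.add[OF module_hom_br]
  and br_scale_right = module_hom.scale[OF module_hom_br]
  and br_zero_right [simp] = module_hom.zero[OF module_hom_br]
  and br_minus_right = module_hom.neg[OF module_hom_br]

lemma br_zero_left [simp]: "br 0 y = 0"
  using br_add_left[of 0 0 y] by simp

lemma br_anticomm: "br x y = - br y x"
proof -
  have "0 = br (x + y) (x + y)" by simp
  also have "\<dots> = (br x x + br y x) + (br x y + br y y)" by (simp only: br_add_left br_add_right)
  also have "\<dots> = br x y + br y x" by (simp add: add.commute)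
  finally show ?thesis by (metis eq_neg_iff_add_eq_0)
qed

lemma br_leibniz: "br z (br x y) = br (br z x) y + br x (br z y)"
proof -
  have "br x (br y z) = - br x (br z y)" using br_anticomm[of y z] by (simp add: br_minus_right)
  moreover have "br y (br z x) = - br (br z x) y" by (rule br_anticomm)
  ultimately have "br z (br x y) - br x (br z y) - br (br z x) y = 0"
    using jacobi[of x y z] by (simp add: algebra_simps)
  then show ?thesis by (simp add: algebra_simps)
qed

lemma ideal_subspace: "ideal I \<Longrightarrow> subspace I"
  by (simp add: lie_ideal_def)

lemma ideal_br_right: "ideal I \<Longrightarrow> y \<in> I \<Longrightarrow> br x y \<in> I"
  by (simp add: lie_ideal_def)

lemma ideal_br_left: "ideal I \<Longrightarrow> y \<in> I \<Longrightarrow> br y x \<in> I"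
  using br_anticomm[of y x] ideal_br_right ideal_subspace subspace_neg by metis

lemma ideal_subalg: "ideal I \<Longrightarrow> subalg I"
  by (simp add: lie_ideal_def lie_subalgebra_def)

lemma subalg_subspace: "subalg S \<Longrightarrow> subspace S"
  by (simp add: lie_subalgebra_def)

lemma subalg_br: "subalg S \<Longrightarrow> x \<in> S \<Longrightarrow> y \<in> S \<Longrightarrow> br x y \<in> S"
  by (simp add: lie_subalgebra_def)

lemma maximal_subalgebra_subalg: "maximal_subalgebra scale br M \<Longrightarrow> subalg M"
  by (simp add: maximal_subalgebra_def)

lemma lie_ideal_zero: "ideal {0}"
  by (simp add: lie_ideal_def subspace_def)

lemma lie_ideal_Int: "ideal A \<Longrightarrow> ideal B \<Longrightarrow> ideal (A \<inter> B)"
  by (simp add: lie_ideal_def subspace_inter)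

lemma lie_ideal_sums:
  assumes "ideal A" "ideal B"
  shows "ideal {a + b | a b. a \<in> A \<and> b \<in> B}"
  unfolding lie_ideal_def
proof (intro conjI allI ballI)
  show "subspace {a + b | a b. a \<in> A \<and> b \<in> B}"
    using assms by (simp add: subspace_sums ideal_subspace)
  fix z u assume "u \<in> {a + b | a b. a \<in> A \<and> b \<in> B}"
  then obtain a b where "u = a + b" "a \<in> A" "b \<in> B" by blast
  moreover have "br z u = br z a + br z b" using \<open>u = a + b\<close> by (simp add: br_add_right)
  ultimately show "br z u \<in> {a + b | a b. a \<in> A \<and> b \<in> B}"
    using assms ideal_br_right by blast
qed

lemma lie_subalgebra_sum_ideal:
  assumes "subalg A" "ideal B"
  shows "subalg {a + b | a b. a \<in> A \<and> b \<in> B}"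
  unfolding lie_subalgebra_def
proof (intro conjI ballI)
  show "subspace {a + b | a b. a \<in> A \<and> b \<in> B}"
    using assms by (simp add: subspace_sums ideal_subspace subalg_subspace)
  fix u v assume "u \<in> {a + b | a b. a \<in> A \<and> b \<in> B}" "v \<in> {a + b | a b. a \<in> A \<and> b \<in> B}"
  then obtain a b a' b' where uv: "u = a + b" "v = a' + b'" "a \<in> A" "b \<in> B" "a' \<in> A" "b' \<in> B"
    by blast
  have "br u v = br a a' + (br a b' + br b a' + br b b')"
    using uv by (simp add: br_add_left br_add_right add.assoc)
  moreover have "br a a' \<in> A" using uv assms subalg_br by blast
  moreover have "br a b' + br b a' + br b b' \<in> B"
    using uv assms ideal_br_left ideal_br_right ideal_subspace subspace_add by metis
  ultimately show "br u v \<in> {a + b | a b. a \<in> A \<and> b \<in> B}" by blast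
qed

text \<open>The preimage of the centre of \<open>J/K\<close> in \<open>J\<close>.\<close>

lemma lie_ideal_centralizer_mod:
  assumes K: "ideal K" and J: "ideal J"
  shows "ideal {z \<in> J. \<forall>a\<in>J. br a z \<in> K}"
  unfolding lie_ideal_def
proof (intro conjI allI ballI)
  show "subspace {z \<in> J. \<forall>a\<in>J. br a z \<in> K}"
    using assms ideal_subspace unfolding subspace_def by (auto simp: br_add_right br_scale_right)
  fix l z assume z: "z \<in> {z \<in> J. \<forall>a\<in>J. br a z \<in> K}"
  have "br a (br l z) \<in> K" if a: "a \<in> J" for a
  proof -
    have "br (br a l) z \<in> K" "br l (br a z) \<in> K"
      using z a J K ideal_br_left ideal_br_right by blast+
    then show ?thesis using br_leibniz[of a l z] K ideal_subspace subspace_add by metis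
  qed
  then show "br l z \<in> {z \<in> J. \<forall>a\<in>J. br a z \<in> K}"
    using z J ideal_br_right by blast
qed

lemma subalg_span_insert_normalizing:
  assumes B: "subalg B" and y: "\<And>b. b \<in> B \<Longrightarrow> br b y \<in> B"
  shows "subalg (span (insert y B))"
  unfolding lie_subalgebra_def
proof (intro conjI ballI)
  show "subspace (span (insert y B))" by simp
  fix u v assume "u \<in> span (insert y B)" "v \<in> span (insert y B)"
  then obtain b c b' c' where uv: "b \<in> B" "u = b + scale c y" "b' \<in> B" "v = b' + scale c' y"
    using B subalg_subspace span_insert_subspaceE by metis
  have "br u v = br b b' + scale c' (br b y) + scale c (- br b' y)"
    using uv br_anticomm[of y b']
    by (simp add: br_add_left br_add_right br_scale_left br_scale_right scale_right_distrib
        algebra_simps)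
  moreover have "br b b' \<in> B" "br b y \<in> B" "br b' y \<in> B" using uv B y subalg_br by blast+
  ultimately have "br u v \<in> B"
    using B subalg_subspace by (metis subspace_add subspace_neg subspace_scale)
  then show "br u v \<in> span (insert y B)" by (meson span_base span_mono subset_insertI subsetD)
qed

lemma br_in_lie_bracket_set: "x \<in> S \<Longrightarrow> y \<in> T \<Longrightarrow> br x y \<in> lie_bracket_set scale br S T"
  unfolding lie_bracket_set_def by (blast intro: span_base)

lemma lie_bracket_set_least:
  "subspace U \<Longrightarrow> (\<And>x y. x \<in> S \<Longrightarrow> y \<in> T \<Longrightarrow> br x y \<in> U) \<Longrightarrow> lie_bracket_set scale br S T \<subseteq> U"
  unfolding lie_bracket_set_def by (rule span_minimal) auto

lemma lie_bracket_set_mono: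
  "S \<subseteq> S' \<Longrightarrow> T \<subseteq> T' \<Longrightarrow> lie_bracket_set scale br S T \<subseteq> lie_bracket_set scale br S' T'"
  unfolding lie_bracket_set_def by (rule span_mono) blast

lemma lie_bracket_set_subset: "subalg S \<Longrightarrow> lie_bracket_set scale br S S \<subseteq> S"
  by (simp add: lie_bracket_set_least subalg_subspace subalg_br)

lemma lie_bracket_set_ideal:
  assumes "ideal I" "ideal J"
  shows "ideal (lie_bracket_set scale br I J)"
proof -
  let ?G = "{br x y |x y. x \<in> I \<and> y \<in> J}"
  have "br z w \<in> span ?G" if "w \<in> span ?G" for z w
    using that
  proof (induction rule: span_induct)
    case base
    show ?case using module_hom.subspace_vimage[OF module_hom_br subspace_span] by (simp add: vimage_def)
  next
    case (step v)
    then obtain x y where v: "v = br x y" "x \<in> I" "y \<in> J" by blast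
    then have "br (br z x) y \<in> ?G" "br x (br z y) \<in> ?G" using assms ideal_br_right by blast+
    then show ?case using v(1) br_leibniz[of z x y] by (simp add: span_add span_base)
  qed
  then show ?thesis unfolding lie_ideal_def lie_bracket_set_def by simp
qed

lemma derived_series_ideal: "ideal I \<Longrightarrow> ideal (derived_series scale br n I)"
  by (induction n) (simp_all add: lie_bracket_set_ideal)

lemma derived_series_Suc_subset:
  "ideal I \<Longrightarrow> derived_series scale br (Suc n) I \<subseteq> derived_series scale br n I"
  by (simp add: lie_bracket_set_subset ideal_subalg derived_series_ideal)

lemma derived_series_subset: "ideal I \<Longrightarrow> derived_series scale br n I \<subseteq> I"
proof (induction n)
  case (Suc n)
  then show ?case using derived_series_Suc_subset[of I n] by blast
qed simp

subsection \<open>Completions\<close>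

lemma abelian_ideal_completionD:
  assumes C: "abelian_ideal_completion scale br M C" and M: "subspace M"
  shows "ideal C" "\<not> C \<subseteq> M" "\<And>I. ideal I \<Longrightarrow> I \<subset> C \<Longrightarrow> I \<subseteq> M"
    and "\<And>x y. x \<in> C \<Longrightarrow> y \<in> C \<Longrightarrow> br x y \<in> M"
proof -
  have compl: "completion scale br M C" and CC: "\<forall>x\<in>C. \<forall>y\<in>C. br x y \<in> strict_core scale br C"
    using C unfolding abelian_ideal_completion_def ideal_completion_def by auto
  show "ideal C" using C unfolding abelian_ideal_completion_def ideal_completion_def by auto
  show "\<not> C \<subseteq> M" using compl unfolding completion_def by auto
  show below: "I \<subseteq> M" if "ideal I" "I \<subset> C" for I
    using compl that ideal_subalg unfolding completion_def by auto
  have "strict_core scale br C \<subseteq> M"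
    unfolding strict_core_def using M below by (intro span_minimal) auto
  then show "br x y \<in> M" if "x \<in> C" "y \<in> C" for x y
    using CC that by auto
qed

lemma abelian_ideal_completionI:
  assumes C: "ideal C" "\<not> C \<subseteq> M" and below: "\<And>I. ideal I \<Longrightarrow> I \<subset> C \<Longrightarrow> I \<subseteq> M"
    and CC: "lie_bracket_set scale br C C \<subseteq> M"
  shows "abelian_ideal_completion scale br M C"
proof -
  have "lie_bracket_set scale br C C \<subset> C"
    using CC C lie_bracket_set_subset[OF ideal_subalg[OF C(1)]] by auto
  then have "lie_bracket_set scale br C C \<subseteq> \<Union>{I. ideal I \<and> I \<subset> C}"
    using lie_bracket_set_ideal[OF C(1) C(1)] by auto
  then have core: "lie_bracket_set scale br C C \<subseteq> strict_core scale br C"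
    unfolding strict_core_def by (rule order_trans[OF _ span_superset])
  have "completion scale br M C"
    unfolding completion_def using C below ideal_subalg by auto
  then show ?thesis
    unfolding abelian_ideal_completion_def ideal_completion_def
    using C(1) core br_in_lie_bracket_set by auto
qed

definition chief_factor :: "'b set \<Rightarrow> 'b set \<Rightarrow> bool" where
  "chief_factor K J \<longleftrightarrow> ideal K \<and> ideal J \<and> K \<subset> J \<and>
     (\<forall>Z. ideal Z \<and> K \<subseteq> Z \<and> Z \<subseteq> J \<longrightarrow> Z = K \<or> Z = J)"

lemma chief_factorD:
  assumes "chief_factor K J"
  shows "ideal K" "ideal J" "K \<subset> J" "\<And>Z. ideal Z \<Longrightarrow> K \<subseteq> Z \<Longrightarrow> Z \<subseteq> J \<Longrightarrow> Z = K \<or> Z = J"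
  using assms unfolding chief_factor_def by auto

lemma lie_bracket_set_subset_if_completion_inside:
  assumes M: "subspace M" and KJ: "chief_factor K J" and KM: "K \<subseteq> M"
    and C: "abelian_ideal_completion scale br M C" and CJ: "C \<subseteq> J"
  shows "lie_bracket_set scale br J J \<subseteq> M"
proof (rule lie_bracket_set_least[OF M])
  note C = abelian_ideal_completionD[OF C M] and KJ = chief_factorD[OF KJ]
  note K = KJ(1) and J = KJ(2)
  let ?Z = "{c + k | c k. c \<in> C \<and> k \<in> K}"
  have "?Z \<subseteq> J"
  proof
    fix z assume "z \<in> ?Z"
    then obtain c k where "z = c + k" "c \<in> C" "k \<in> K" by blast
    then show "z \<in> J" using CJ KJ(3) J ideal_subspace subspace_add by (metis psubsetE subsetD)
  qed
  moreover have "K \<subseteq> ?Z" "C \<subseteq> ?Z"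
    using C(1) K ideal_subspace sums_superset_left sums_superset_right by auto
  moreover have "\<not> C \<subseteq> K" using C(2) KM by auto
  ultimately have Z: "?Z = J"
    using KJ(4)[OF lie_ideal_sums[OF C(1) K]] by auto
  have CK: "C \<inter> K \<subseteq> M" using C(3)[OF lie_ideal_Int[OF C(1) K]] \<open>\<not> C \<subseteq> K\<close> by blast
  fix j1 j2 assume "j1 \<in> J" "j2 \<in> J"
  then obtain c1 k1 c2 k2 where j: "j1 = c1 + k1" "c1 \<in> C" "k1 \<in> K" "j2 = c2 + k2" "c2 \<in> C" "k2 \<in> K"
    using Z by blast
  have "br j1 j2 = br c1 c2 + br c1 k2 + br k1 c2 + br k1 k2"
    using j by (simp add: br_add_left br_add_right add.assoc)
  moreover have "br c1 c2 \<in> M" using C(4) j by blast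
  moreover have "br c1 k2 \<in> M" "br k1 c2 \<in> M"
    using CK j C(1) K ideal_br_left ideal_br_right by blast+
  moreover have "br k1 k2 \<in> M" using KM K j ideal_br_right by blast
  ultimately show "br j1 j2 \<in> M" using M subspace_add by metis
qed

lemma lie_bracket_set_subset_if_completion_outside:
  assumes M: "maximal_subalgebra scale br M" and J: "ideal J"
    and C: "abelian_ideal_completion scale br M C" and CJ: "\<not> C \<subseteq> J"
  shows "lie_bracket_set scale br J J \<subseteq> M"
proof -
  have Msa: "subalg M" using M maximal_subalgebra_subalg by blast
  have Msub: "subspace M" using Msa subalg_subspace by blast
  note C = abelian_ideal_completionD[OF C Msub]
  have JC: "J \<inter> C \<subseteq> M" using C(3)[OF lie_ideal_Int[OF J C(1)]] CJ by blast
  let ?MC = "{m + c | m c. m \<in> M \<and> c \<in> C}"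
  have "M \<subseteq> ?MC" "C \<subseteq> ?MC"
    using C(1) Msub ideal_subspace sums_superset_left sums_superset_right by auto
  then have "?MC = M \<or> ?MC = UNIV"
    using M lie_subalgebra_sum_ideal[OF Msa C(1)] unfolding maximal_subalgebra_def by auto
  moreover have "?MC \<noteq> M" using \<open>C \<subseteq> ?MC\<close> C(2) by auto
  ultimately have MC: "?MC = UNIV" by simp
  show ?thesis
  proof (rule lie_bracket_set_least[OF Msub])
    fix j1 j2 assume j: "j1 \<in> J" "j2 \<in> J"
    obtain m1 c1 m2 c2 where mc: "j1 = m1 + c1" "m1 \<in> M" "c1 \<in> C" "j2 = m2 + c2" "m2 \<in> M" "c2 \<in> C"
      using MC by blast
    have "br j1 j2 = br m1 m2 + (br c1 j2 - br c1 c2) + br j1 c2"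
      using mc by (simp add: br_add_left br_add_right algebra_simps)
    moreover have "br m1 m2 \<in> M" using mc Msa subalg_br by blast
    moreover have "br c1 j2 \<in> M"
      using JC ideal_br_left[OF C(1) mc(3)] ideal_br_right[OF J j(2)] by auto
    moreover have "br j1 c2 \<in> M"
      using JC ideal_br_right[OF C(1) mc(6)] ideal_br_left[OF J j(1)] by auto
    moreover have "br c1 c2 \<in> M" using C(4) mc by auto
    ultimately show "br j1 j2 \<in> M" using Msub by (simp add: subspace_add subspace_diff)
  qed
qed

lemma chief_factor_no_abelian_ideal_completion:
  assumes M: "maximal_subalgebra scale br M" and KJ: "chief_factor K J"
    and perfect: "J \<subseteq> lie_bracket_set scale br J J" and KM: "K \<subseteq> M" and JM: "\<not> J \<subseteq> M"
  shows "\<not> abelian_ideal_completion scale br M C"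
proof
  assume C: "abelian_ideal_completion scale br M C"
  have "subspace M" using M maximal_subalgebra_subalg subalg_subspace by blast
  then have "lie_bracket_set scale br J J \<subseteq> M"
    using lie_bracket_set_subset_if_completion_inside[OF _ KJ KM C]
      lie_bracket_set_subset_if_completion_outside[OF M chief_factorD(2)[OF KJ] C] by blast
  then show False using perfect JM by blast
qed

lemma module_hom_funpow_br: "module_hom scale scale (br x ^^ n)"
proof (induction n)
  case (Suc n)
  show ?case using module_hom_compose[OF Suc module_hom_br] by (simp add: comp_def)
qed (simp add: module_hom_iff module_axioms)

lemmas funpow_br_add = module_hom.add[OF module_hom_funpow_br]
  and funpow_br_scale = module_hom.scale[OF module_hom_funpow_br]
  and funpow_br_zero [simp] = module_hom.zero[OF module_hom_funpow_br]
  and funpow_br_diff = module_hom.diff[OF module_hom_funpow_br]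

lemma funpow_br_br_eq_zero:
  "(br x ^^ i) a = 0 \<Longrightarrow> (br x ^^ j) b = 0 \<Longrightarrow> (br x ^^ (i + j)) (br a b) = 0"
proof (induction "i + j" arbitrary: i j a b rule: less_induct)
  case less
  show ?case
  proof (cases "i = 0 \<or> j = 0")
    case True
    then show ?thesis using less.prems by auto
  next
    case False
    then obtain i' j' where ij: "i = Suc i'" "j = Suc j'" by (meson not0_implies_Suc)
    have a: "(br x ^^ i') (br x a) = 0" and b: "(br x ^^ j') (br x b) = 0"
      using less.prems ij by (simp_all add: funpow_Suc_right del: funpow.simps)
    have "(br x ^^ (i + j)) (br a b) = (br x ^^ (i' + j)) (br x (br a b))"
      using ij by (simp add: funpow_Suc_right del: funpow.simps)
    also have "\<dots> = (br x ^^ (i' + j)) (br (br x a) b) + (br x ^^ (i + j')) (br a (br x b))"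
      using ij br_leibniz[of x a b] by (simp add: funpow_br_add br_add_right)
    also have "\<dots> = 0"
      using less.hyps[of i' j] less.hyps[of i j'] a b less.prems ij by simp
    finally show ?thesis .
  qed
qed

definition null_component :: "'b \<Rightarrow> 'b set" where
  "null_component x = {v. \<exists>n. (br x ^^ n) v = 0}"

lemma null_component_subalg: "subalg (null_component x)"
  unfolding lie_subalgebra_def subspace_def
proof (intro conjI ballI allI)
  show "0 \<in> null_component x" unfolding null_component_def by auto
  fix u v assume "u \<in> null_component x" "v \<in> null_component x"
  then obtain m n where m: "(br x ^^ m) u = 0" and n: "(br x ^^ n) v = 0"
    unfolding null_component_def by blast
  have "(br x ^^ (n + m)) u = 0" "(br x ^^ (m + n)) v = 0"
    using m n by (simp_all add: funpow_add)
  then have "(br x ^^ (m + n)) (u + v) = 0" by (simp add: funpow_br_add add.commute)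
  then show "u + v \<in> null_component x" unfolding null_component_def by blast
  show "br u v \<in> null_component x"
    using funpow_br_br_eq_zero[OF m n] unfolding null_component_def by blast
next
  fix c u assume "u \<in> null_component x"
  then show "scale c u \<in> null_component x"
    unfolding null_component_def by (auto simp: funpow_br_scale)
qed

end

locale fd_lie_alg = lie_alg scale br + finite_dimensional_vector_space scale Basis
  for scale :: "'a::field \<Rightarrow> 'b::ab_group_add \<Rightarrow> 'b" and br and Basis
begin

lemma ex_maximal_subalgebra_between:
  assumes "subalg S" "S \<subset> A"
  shows "\<exists>B. subalg B \<and> S \<subseteq> B \<and> B \<subset> A \<and> (\<forall>T. subalg T \<and> B \<subseteq> T \<and> T \<subset> A \<longrightarrow> T = B)"
proof -
  let ?P = "\<lambda>T. subalg T \<and> S \<subseteq> T \<and> T \<subset> A"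
  have start: "?P S" using assms by simp
  obtain B where B: "?P B" and greatest: "\<And>T. ?P T \<Longrightarrow> dim T \<le> dim B"
    using ex_dim_maximal[of ?P, OF start] by auto
  have maximal: "T = B" if T: "subalg T" "B \<subseteq> T" "T \<subset> A" for T
  proof -
    have "dim T \<le> dim B" using T B greatest[of T] by auto
    then show ?thesis using subspace_dim_equal[of B T] T B subalg_subspace by simp
  qed
  show ?thesis using B maximal by blast
qed

lemma ex_maximal_subalgebra_superset:
  assumes "subalg S" "S \<noteq> UNIV"
  shows "\<exists>M. maximal_subalgebra scale br M \<and> S \<subseteq> M"
proof -
  obtain M where "subalg M" "S \<subseteq> M" "M \<subset> UNIV"
    and "\<forall>T. subalg T \<and> M \<subseteq> T \<and> T \<subset> UNIV \<longrightarrow> T = M"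
    using ex_maximal_subalgebra_between[OF assms(1), of UNIV] assms(2) by blast
  then have "maximal_subalgebra scale br M" unfolding maximal_subalgebra_def by auto
  then show ?thesis using \<open>S \<subseteq> M\<close> by auto
qed

lemma ex_chief_factor:
  assumes J: "ideal J" and "J \<noteq> {0}"
  shows "\<exists>K. chief_factor K J"
proof -
  let ?P = "\<lambda>K. ideal K \<and> K \<subset> J"
  have start: "?P {0}" using assms lie_ideal_zero subspace_0[OF ideal_subspace[OF J]] by auto
  obtain K where K: "?P K" and greatest: "\<And>K'. ?P K' \<Longrightarrow> dim K' \<le> dim K"
    using ex_dim_maximal[of ?P, OF start] by auto
  have "K = Z" if Z: "ideal Z" "K \<subseteq> Z" "Z \<subset> J" for Z
  proof -
    have "dim Z \<le> dim K" using Z greatest[of Z] by simp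
    then show ?thesis using subspace_dim_equal[of K Z] Z K ideal_subspace by simp
  qed
  then have "Z = K \<or> Z = J" if "ideal Z" "K \<subseteq> Z" "Z \<subseteq> J" for Z
    using that by (cases "Z = J") auto
  then have "chief_factor K J" using K J unfolding chief_factor_def by auto
  then show ?thesis by auto
qed

subsection \<open>Engel's theorem\<close>

lemma common_null_vector_span_insert:
  assumes U: "subspace U" and B: "subspace B"
    and yW: "\<And>w. w \<in> W \<Longrightarrow> br y w \<in> W" and yU: "\<And>u. u \<in> U \<Longrightarrow> br y u \<in> U"
    and yB: "\<And>b. b \<in> B \<Longrightarrow> br b y \<in> B"
    and w1: "w1 \<in> W" "w1 \<notin> U" "\<And>b. b \<in> B \<Longrightarrow> br b w1 \<in> U"
    and nil: "(br y ^^ n) w1 \<in> U"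
  shows "\<exists>w\<in>W. w \<notin> U \<and> (\<forall>a\<in>span (insert y B). br a w \<in> U)"
proof -
  txt \<open>The vectors of \<open>W\<close> killed by \<open>B\<close> modulo \<open>U\<close> form an \<open>ad y\<close>-stable set; follow the
    \<open>ad y\<close>-orbit of \<open>w1\<close> up to its last element outside \<open>U\<close>.\<close>
  define W0 where "W0 = {w \<in> W. \<forall>b\<in>B. br b w \<in> U}"
  have "br y w \<in> W0" if w: "w \<in> W0" for w
  proof -
    have "br b (br y w) \<in> U" if b: "b \<in> B" for b
    proof -
      have "br (br b y) w \<in> U" "br y (br b w) \<in> U" using w b yB yU unfolding W0_def by blast+
      then show ?thesis using br_leibniz[of b y w] U subspace_add by metis
    qed
    then show ?thesis using w yW unfolding W0_def by blast
  qed
  then have W0: "(br y ^^ k) w1 \<in> W0" for k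
    by (rule funpow_closed) (use w1 in \<open>auto simp: W0_def\<close>)
  obtain k where "(br y ^^ k) w1 \<notin> U" "br y ((br y ^^ k) w1) \<in> U"
    using ex_least_nat_less[of "\<lambda>k. (br y ^^ k) w1 \<in> U" n] nil w1(2) by auto
  moreover have "(br y ^^ k) w1 \<in> W" "\<forall>b\<in>B. br b ((br y ^^ k) w1) \<in> U"
    using W0[of k] unfolding W0_def by auto
  moreover have "br a w \<in> U"
    if a: "a \<in> span (insert y B)" and w: "br y w \<in> U" "\<forall>b\<in>B. br b w \<in> U" for a w
  proof -
    obtain b c where "b \<in> B" "a = b + scale c y" using span_insert_subspaceE[OF a B] .
    then show ?thesis using w U by (simp add: br_add_left br_scale_left subspace_add subspace_scale)
  qed
  ultimately show ?thesis by blast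
qed

lemma eq_span_insert_if_maximal_normalized:
  assumes A: "subspace A" and B: "subalg B" "B \<subset> A"
    and maximal: "\<And>T. subalg T \<Longrightarrow> B \<subseteq> T \<Longrightarrow> T \<subset> A \<Longrightarrow> T = B"
    and y: "y \<in> A" "y \<notin> B" "\<And>b. b \<in> B \<Longrightarrow> br b y \<in> B"
  shows "A = span (insert y B)"
proof -
  have "span (insert y B) \<subseteq> A" using A B(2) y(1) by (intro span_minimal) auto
  moreover have "B \<subseteq> span (insert y B)" "y \<in> span (insert y B)"
    using span_superset[of "insert y B"] by auto
  ultimately show ?thesis
    using maximal[OF subalg_span_insert_normalizing[OF B(1) y(3)]] y(2) by auto
qed

text \<open>
  Engel's theorem relative to \<open>K\<close>: if every \<open>ad x\<close>, \<open>x \<in> J\<close>, is nilpotent on \<open>J/K\<close>, then each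
  subalgebra \<open>K \<subseteq> A \<subseteq> J\<close> kills a nonzero vector of every \<open>A\<close>-module \<open>W/U\<close> with \<open>K \<subseteq> U \<subset> W \<subseteq> J\<close>.
  A maximal subalgebra \<open>B\<close> of \<open>A\<close> containing \<open>K\<close> has codimension one, by induction applied to the
  module \<open>A/B\<close>.
\<close>

lemma engel_common_null_vector:
  assumes K: "ideal K"
    and nil: "\<And>x y. x \<in> J \<Longrightarrow> y \<in> J \<Longrightarrow> \<exists>n. (br x ^^ n) y \<in> K"
  shows "subalg A \<Longrightarrow> K \<subseteq> A \<Longrightarrow> A \<subseteq> J \<Longrightarrow> subspace W \<Longrightarrow> subspace U \<Longrightarrow> K \<subseteq> U \<Longrightarrow> U \<subset> W
    \<Longrightarrow> W \<subseteq> J \<Longrightarrow> (\<And>a w. a \<in> A \<Longrightarrow> w \<in> W \<Longrightarrow> br a w \<in> W)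
    \<Longrightarrow> (\<And>a u. a \<in> A \<Longrightarrow> u \<in> U \<Longrightarrow> br a u \<in> U)
    \<Longrightarrow> \<exists>w\<in>W. w \<notin> U \<and> (\<forall>a\<in>A. br a w \<in> U)"
proof (induction "dim A" arbitrary: A W U rule: less_induct)
  case less
  note A = less.prems(1-3) and WU = less.prems(4-8) and inv = less.prems(9,10)
  show ?case
  proof (cases "A = K")
    case True
    obtain w where "w \<in> W" "w \<notin> U" using WU(4) by auto
    moreover have "br a w \<in> U" if "a \<in> A" for a
      using ideal_br_left[OF K, of a w] that True WU(3) by auto
    ultimately show ?thesis by auto
  next
    case False
    have "K \<subset> A" using False A(2) by auto
    obtain B
      where "subalg B \<and> K \<subseteq> B \<and> B \<subset> A \<and> (\<forall>T. subalg T \<and> B \<subseteq> T \<and> T \<subset> A \<longrightarrow> T = B)"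
      using ex_maximal_subalgebra_between[OF ideal_subalg[OF K] \<open>K \<subset> A\<close>] ..
    then have B: "subalg B" "K \<subseteq> B" "B \<subset> A"
      and maximal: "\<And>T. subalg T \<Longrightarrow> B \<subseteq> T \<Longrightarrow> T \<subset> A \<Longrightarrow> T = B" by simp_all
    have dim_B: "dim B < dim A" using dim_strict_mono[of B A] A(1) B subalg_subspace by auto
    have "\<exists>y\<in>A. y \<notin> B \<and> (\<forall>b\<in>B. br b y \<in> B)"
    proof (rule less.hyps[OF dim_B])
      show "subalg B" "K \<subseteq> B" "K \<subseteq> B" "B \<subseteq> J" "subspace A" "subspace B" "B \<subset> A" "A \<subseteq> J"
        using A B subalg_subspace by auto
      show "br b a \<in> A" if "b \<in> B" "a \<in> A" for b a using that subalg_br[OF A(1)] B(3) by auto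
      show "br b b' \<in> B" if "b \<in> B" "b' \<in> B" for b b' using that subalg_br[OF B(1)] by auto
    qed
    then obtain y where y: "y \<in> A" "y \<notin> B" "\<And>b. b \<in> B \<Longrightarrow> br b y \<in> B" by auto
    have A_eq: "A = span (insert y B)"
      using eq_span_insert_if_maximal_normalized[OF subalg_subspace[OF A(1)] B(1,3) maximal y] .
    have "\<exists>w\<in>W. w \<notin> U \<and> (\<forall>b\<in>B. br b w \<in> U)"
      by (rule less.hyps[OF dim_B]) (use A B WU inv in auto)
    then obtain w1 where w1: "w1 \<in> W" "w1 \<notin> U" "\<And>b. b \<in> B \<Longrightarrow> br b w1 \<in> U" by auto
    obtain n where "(br y ^^ n) w1 \<in> K" using nil[of y w1] y(1) A(3) w1(1) WU(5) by auto
    then have "(br y ^^ n) w1 \<in> U" using WU(3) by auto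
    then show ?thesis
      using common_null_vector_span_insert[OF WU(2) subalg_subspace[OF B(1)] inv(1)[OF y(1)]
          inv(2)[OF y(1)] y(3) w1] A_eq by simp
  qed
qed

lemma ex_not_nilpotent_mod_chief_factor:
  assumes KJ: "chief_factor K J" and perfect: "J \<subseteq> lie_bracket_set scale br J J"
  shows "\<exists>x\<in>J. \<exists>y\<in>J. \<forall>n. (br x ^^ n) y \<notin> K"
proof (rule ccontr)
  assume "\<not> ?thesis"
  then have nil: "\<forall>x\<in>J. \<forall>y\<in>J. \<exists>n. (br x ^^ n) y \<in> K" by auto
  note K = chief_factorD(1)[OF KJ] and J = chief_factorD(2)[OF KJ]
    and KJ_sub = chief_factorD(3)[OF KJ]
  have "\<exists>w\<in>J. w \<notin> K \<and> (\<forall>a\<in>J. br a w \<in> K)"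
    by (rule engel_common_null_vector[of K J])
      (use K J KJ_sub nil ideal_subalg ideal_subspace ideal_br_right in auto)
  then obtain w where w: "w \<in> J" "w \<notin> K" "\<forall>a\<in>J. br a w \<in> K" by auto
  let ?Z = "{z \<in> J. \<forall>a\<in>J. br a z \<in> K}"
  have "K \<subseteq> ?Z" using K KJ_sub ideal_br_right by auto
  moreover have "?Z \<noteq> K" using w by auto
  moreover have "?Z \<subseteq> J" by auto
  ultimately have "?Z = J"
    using chief_factorD(4)[OF KJ lie_ideal_centralizer_mod[OF K J]] by auto
  then have "lie_bracket_set scale br J J \<subseteq> K"
    by (intro lie_bracket_set_least ideal_subspace[OF K]) auto
  then show False using perfect KJ_sub by auto
qed

subsection \<open>Fitting decomposition\<close>

lemma fitting_decomposition:
  obtains v0 w where "v0 \<in> null_component x" "v = v0 + br x w"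
proof -
  txt \<open>Once the ranges of \<open>(ad x)\<^sup>k\<close> stop shrinking at \<open>N = k + 1\<close>, \<open>(ad x)\<^sup>N v\<close> lies in
    the range of \<open>(ad x)\<^bsup>2N\<^esub>\<close>, which splits \<open>v\<close>.\<close>
  define X where "X n = range (br x ^^ n)" for n
  have X_Suc: "X (Suc n) = br x ` X n" for n unfolding X_def by (simp add: image_comp)
  have "subspace (X n)" for n
    unfolding X_def by (rule module_hom.subspace_image[OF module_hom_funpow_br subspace_UNIV])
  moreover have "X (Suc n) \<subseteq> X n" for n
    by (induction n) (auto simp: X_Suc X_def)
  ultimately obtain k where k: "X (Suc k) = X k"
    using decreasing_subspaces_stabilize[of X] by blast
  have stable: "X (k + j) = X k" for j
  proof (induction j)
    case (Suc j)
    then show ?case using X_Suc[of "k + j"] X_Suc[of k] k by simp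
  qed simp
  have "X (Suc k + Suc k) = X (Suc k)" using stable[of "Suc (Suc k)"] k by simp
  moreover have "(br x ^^ Suc k) v \<in> X (Suc k)" unfolding X_def by (rule rangeI)
  ultimately have "(br x ^^ Suc k) v \<in> X (Suc k + Suc k)" by simp
  then obtain u where "(br x ^^ Suc k) v = (br x ^^ (Suc k + Suc k)) u"
    unfolding X_def by blast
  then have "(br x ^^ Suc k) v = (br x ^^ Suc k) ((br x ^^ Suc k) u)"
    by (simp only: funpow_add comp_apply)
  then have "(br x ^^ Suc k) (v - (br x ^^ Suc k) u) = 0"
    unfolding funpow_br_diff by simp
  then have "v - (br x ^^ Suc k) u \<in> null_component x"
    unfolding null_component_def by blast
  moreover have "v = (v - (br x ^^ Suc k) u) + br x ((br x ^^ k) u)" by simp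
  ultimately show thesis by (rule that)
qed

lemma subspace_eq_UNIV_if_null_component_ideal:
  assumes M: "subspace M" "null_component x \<subseteq> M" and J: "ideal J" "x \<in> J" "J \<subseteq> M"
  shows "M = UNIV"
proof -
  have "v \<in> M" for v
  proof -
    obtain v0 w where "v0 \<in> null_component x" "v = v0 + br x w" by (rule fitting_decomposition)
    moreover have "br x w \<in> M" using ideal_br_left[OF J(1,2)] J(3) by auto
    ultimately show ?thesis using M by (auto intro: subspace_add)
  qed
  then show ?thesis by auto
qed

lemma ex_maximal_subalgebra_excluding:
  assumes K: "ideal K" and J: "ideal J" "x \<in> J" and y: "\<And>n. (br x ^^ n) y \<notin> K"
  shows "\<exists>M. maximal_subalgebra scale br M \<and> K \<subseteq> M \<and> \<not> J \<subseteq> M"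
proof -
  let ?S = "{l + k | l k. l \<in> null_component x \<and> k \<in> K}"
  have "y \<notin> ?S"
  proof
    assume "y \<in> ?S"
    then obtain l k n where "y = l + k" "(br x ^^ n) l = 0" "k \<in> K"
      unfolding null_component_def by auto
    moreover have "(br x ^^ n) k \<in> K" using funpow_closed[of K "br x"] \<open>k \<in> K\<close> K ideal_br_right by auto
    ultimately show False using y[of n] by (simp add: funpow_br_add)
  qed
  then have "?S \<noteq> UNIV" by (metis UNIV_I)
  then obtain M where M: "maximal_subalgebra scale br M" "?S \<subseteq> M"
    using ex_maximal_subalgebra_superset[OF lie_subalgebra_sum_ideal[OF null_component_subalg K]]
    by blast
  have null_M: "null_component x \<subseteq> M"
    using sums_superset_left[OF ideal_subspace[OF K], of "null_component x"] M(2) by (rule order.trans)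
  have K_M: "K \<subseteq> M"
    using sums_superset_right[OF subalg_subspace[OF null_component_subalg[of x]], of K] M(2)
    by (rule order.trans)
  have "\<not> J \<subseteq> M"
  proof
    assume "J \<subseteq> M"
    moreover have "subspace M" using M(1) maximal_subalgebra_subalg subalg_subspace by auto
    ultimately have "M = UNIV" using subspace_eq_UNIV_if_null_component_ideal null_M J by simp
    then show False using M(1) unfolding maximal_subalgebra_def by simp
  qed
  then show ?thesis using M(1) K_M by auto
qed

subsection \<open>The two inclusions\<close>

lemma ex_abelian_ideal_completion:
  assumes D: "ideal D" "\<not> D \<subseteq> M" "lie_bracket_set scale br D D \<subseteq> M"
  shows "\<exists>C. abelian_ideal_completion scale br M C"
proof -
  let ?P = "\<lambda>C. ideal C \<and> C \<subseteq> D \<and> \<not> C \<subseteq> M"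
  obtain C where C: "ideal C" "C \<subseteq> D" "\<not> C \<subseteq> M" and least: "\<And>C'. ?P C' \<Longrightarrow> dim C \<le> dim C'"
    using ex_has_least_nat[of ?P D dim] D by auto
  have "I \<subseteq> M" if I: "ideal I" "I \<subset> C" for I
  proof (rule ccontr)
    assume "\<not> I \<subseteq> M"
    then have "dim C \<le> dim I" using least[of I] I C(2) by auto
    moreover have "dim I < dim C" using dim_strict_mono I C(1) ideal_subspace by auto
    ultimately show False by simp
  qed
  moreover have "lie_bracket_set scale br C C \<subseteq> M"
    using lie_bracket_set_mono[of C D C D] C(2) D(3) by auto
  ultimately show ?thesis using abelian_ideal_completionI[OF C(1,3)] by auto
qed

lemma solvable_ideal_subset_maximal_subalgebra:
  assumes R: "ideal R" "lie_solvable scale br R" and M: "maximal_subalgebra scale br M"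
    and no_completion: "\<nexists>C. abelian_ideal_completion scale br M C"
  shows "R \<subseteq> M"
proof (rule ccontr)
  assume "\<not> R \<subseteq> M"
  let ?D = "\<lambda>k. derived_series scale br k R"
  obtain n where "?D n = {0}" using R(2) unfolding lie_solvable_def by auto
  moreover have "0 \<in> M" using subspace_0 subalg_subspace maximal_subalgebra_subalg[OF M] by auto
  ultimately have "?D n \<subseteq> M" by simp
  moreover have "\<not> ?D 0 \<subseteq> M" using \<open>\<not> R \<subseteq> M\<close> by simp
  ultimately obtain k where "\<forall>i\<le>k. \<not> ?D i \<subseteq> M" "?D (Suc k) \<subseteq> M"
    using ex_least_nat_less[of "\<lambda>k. ?D k \<subseteq> M" n] by blast
  then show False
    using ex_abelian_ideal_completion[OF derived_series_ideal[OF R(1)], of k M] no_completion by simp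
qed

lemma solvable_ideal_subset_Fstar:
  assumes "ideal R" "lie_solvable scale br R"
  shows "R \<subseteq> Fstar scale br"
  unfolding Fstar_def
proof (rule Inter_greatest)
  fix M assume "M \<in> {M. maximal_subalgebra scale br M \<and> \<not> (\<exists>C. abelian_ideal_completion scale br M C)}"
  then show "R \<subseteq> M" using solvable_ideal_subset_maximal_subalgebra[OF assms] by simp
qed

lemma ideal_subset_Fstar_solvable:
  assumes I: "ideal I" "I \<subseteq> Fstar scale br"
  shows "lie_solvable scale br I"
proof (rule ccontr)
  assume not_solvable: "\<not> lie_solvable scale br I"
  let ?D = "\<lambda>n. derived_series scale br n I"
  obtain n where n: "?D (Suc n) = ?D n"
    using decreasing_subspaces_stabilize[of ?D, OF ideal_subspace[OF derived_series_ideal[OF I(1)]]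
        derived_series_Suc_subset[OF I(1)]] by blast
  define J where "J = ?D n"
  have J: "ideal J" "J \<noteq> {0}"
    using not_solvable derived_series_ideal[OF I(1)] unfolding J_def lie_solvable_def by blast+
  have JF: "J \<subseteq> Fstar scale br"
    unfolding J_def using derived_series_subset[OF I(1)] I(2) by (rule order.trans)
  have perfect: "J \<subseteq> lie_bracket_set scale br J J"
    using n unfolding J_def by (simp del: derived_series.simps add: derived_series.simps(2)[symmetric])
  obtain K where KJ: "chief_factor K J" using ex_chief_factor[OF J(1,2)] by blast
  obtain x y where xy: "x \<in> J" "\<And>m. (br x ^^ m) y \<notin> K"
    using ex_not_nilpotent_mod_chief_factor[OF KJ perfect] by blast
  obtain M where M: "maximal_subalgebra scale br M" "K \<subseteq> M" "\<not> J \<subseteq> M"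
    using ex_maximal_subalgebra_excluding[OF chief_factorD(1)[OF KJ] J(1) xy] by blast
  then have "\<nexists>C. abelian_ideal_completion scale br M C"
    using chief_factor_no_abelian_ideal_completion[OF M(1) KJ perfect] by simp
  then have "Fstar scale br \<subseteq> M"
    unfolding Fstar_def using M(1) by (intro Inter_lower) simp
  then show False using JF M(3) by auto
qed

lemma phistar_eq_solv_radical: "phistar scale br = solv_radical scale br"
proof -
  have "ideal I \<and> I \<subseteq> Fstar scale br \<longleftrightarrow> ideal I \<and> lie_solvable scale br I" for I
    using ideal_subset_Fstar_solvable solvable_ideal_subset_Fstar by auto
  then show ?thesis unfolding phistar_def solv_radical_def by simp
qed

end

theorem theorem2p11:
  fixes scale :: "'a::field \<Rightarrow> 'b::ab_group_add \<Rightarrow> 'b"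
    and br :: "'b \<Rightarrow> 'b \<Rightarrow> 'b"
  assumes "lie_algebra scale br"
    and "fin_dim scale"
  shows "phistar scale br = solv_radical scale br"
proof -
  interpret vector_space scale using assms(1) unfolding lie_algebra_def by simp
  obtain S where S: "finite S" "span S = UNIV" using assms(2) unfolding fin_dim_def by blast
  obtain B where B: "independent B" "UNIV \<subseteq> span B" by (rule basis_exists[of UNIV])
  moreover have "finite B" using independent_span_bound[OF S(1) B(1)] S(2) by simp
  ultimately interpret fd_lie_alg scale br B using assms(1) by unfold_locales auto
  show ?thesis by (rule phistar_eq_solv_radical)
qed

end
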